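(* Assume $d(\eta,\cdot)$ attains its minimum over $\mathcal G$ at $g^*$. Then $\inf_{g\in\mathcal G^\circ_{ds}}d(\eta,g)=d(\eta,g^* )$, and for every OCDS prediction $g^{ds}\in\mathcal G^\circ_{ds}$, $$d(\eta,g^{ds})=d(\eta,g^* )+d(g^*,g^{ds}).$$ If in addition $b^*_j\in(0,1)$ for all $j\le p$ and $w^*_\ell\in(0,1)$ for all $\ell$, then with $g^{ds*}=g^{ds}(w^*,b^*_{1:p})$, $$d(g^*,g^{ds})=\big[d(\eta,g^{ds*})-d(\eta,g^* )\big]+\big[d(\eta,g^{ds})-d(\eta,g^{ds*})\big],$$ where the first bracket is nonnegative.
   Context: Standard setup. Let $n\ge1$, $k\ge2$, $p\ge1$ be integers and $m=p+k$. There are $n$ data points $x_1,\dots,x_n$ and $p$ rules $h^{(1)},\dots,h^{(p)}$, each a map from $\{x_1,\dots,x_n\}$ to $\{1,\dots,k\}\cup\{?\}$, where "?" means abstain. Let $n_j\ge1$ be the number of indices $i$ with $h^{(j)}(x_i)\neq ?$. $\Delta_k$ denotes the probability simplex in $\mathbb{R}^k$; an element $z\in\Delta_k^n\subset\mathbb{R}^{nk}$ is written $z=(z_1,\dots,z_n)$ with $z_i=(z_{i1},\dots,z_{ik})\in\Delta_k$. For $j\le p$ let $h^{(j)}\in\{0,1\}^{nk}$ also denote the vector with $h^{(j)}_{i\ell}=1$ iff $h^{(j)}(x_i)=\ell$; for $\ell\le k$ let $\vec e^{\,n}_\ell\in\{0,1\}^{nk}$ have entries $(\vec e^{\,n}_\ell)_{i\ell'}=\mathbf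 1(\ell'=\ell)$. The matrix $A\in\mathbb{R}^{m\times nk}$ has rows $a^{(j)}=h^{(j)}/n_j$ for $1\le j\le p$ and $a^{(p+\ell)}=\vec e^{\,n}_\ell/n$ for $1\le\ell\le k$. For $\theta\in\mathbb{R}^m$ put $a^{(\theta)}=A^\top\theta\in\mathbb{R}^{nk}$ (entries $a^{(\theta)}_{i\ell}$) and define $g^{(\theta)}\in\Delta_k^n$ by $g^{(\theta)}_{i\ell}=\exp(a^{(\theta)}_{i\ell})/\sum_{\ell'=1}^k\exp(a^{(\theta)}_{i\ell'})$; let $\mathcal G=\{g^{(\theta)}:\theta\in\mathbb{R}^m\}$. A fixed "true labeling" $\eta\in\Delta_k^n$ is given and $b^*:=A\eta\in\mathbb{R}^m$; write $b^*_j$ ($j\le p$) for the empirical rule accuracies and $w^*_\ell:=b^*_{p+\ell}$ ($\ell\le k$) for the empirical class frequencies. For $\mu,\nu\in\Delta_k^n$, $d(\mu,\nu)=\sum_{i=1}^n\mathrm{KL}(\mu_i\|\nu_i)=\sum_{i,\ell}\mu_{i\ell}\log(\mu_{i\ell}/\nu_{i\ell})$, with $0\log(0/x)=0$. One-coin Dawid–Skene (OCDS) prediction: for class frequencies $w\in\Delta_k$ and rule accuracies $b\in(0,1)^p$, $g^{ds}(w,b)\in\Delta_k^n$ is defined by $g^{ds}(w,b)_{i\ell}=\widehat g_{i\ell}/\sum_{\ell'}\widehat g_{i\ell'}$ where $\widehat g_{i\ell}=w_\ell\prod_{j:\,h^{(j)}(x_i)=\ell}b_j\prod_{j:\,h^{(j)}(x_i)\notin\{\ell,?\}}\frac{1-b_j}{k-1}$.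 $\mathcal G^\circ_{ds}=\{g^{ds}(w,b):\ w\in\Delta_k,\ 0<w_\ell<1\ \forall\ell,\ b\in(0,1)^p\}$. *)

theory Defs
  imports Complex_Main
begin

text \<open>Conventions (0-based): data points are indexed by i < n, classes by l < k,
rules by j < p.  A rule set is h :: nat => nat => nat option, where
h j i = Some l means rule j assigns class l to x_i and h j i = None means abstain.
Elements of R^{nk} (and of Delta_k^n) are functions z :: nat => nat => real,
z i l being the (i,l) entry; theta in R^m is a function nat => real
(coordinates r < m = p + k).  Row j < p of A corresponds to rule j,
row p + l to class l.\<close>

definition nrule :: "nat \<Rightarrow> (nat \<Rightarrow> nat \<Rightarrow> nat option) \<Rightarrow> nat \<Rightarrow> nat" where
  "nrule n h j = card {i. i < n \<and> h j i \<noteq> None}"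

definition Amat :: "nat \<Rightarrow> nat \<Rightarrow> nat \<Rightarrow> (nat \<Rightarrow> nat \<Rightarrow> nat option)
    \<Rightarrow> nat \<Rightarrow> nat \<Rightarrow> nat \<Rightarrow> real" where
  "Amat n k p h r i l =
     (if r < p then (if h r i = Some l then 1 / real (nrule n h r) else 0)
      else if r < p + k then (if l = r - p then 1 / real n else 0)
      else 0)"

definition atheta :: "nat \<Rightarrow> nat \<Rightarrow> nat \<Rightarrow> (nat \<Rightarrow> nat \<Rightarrow> nat option)
    \<Rightarrow> (nat \<Rightarrow> real) \<Rightarrow> nat \<Rightarrow> nat \<Rightarrow> real" where
  "atheta n k p h \<theta> i l = (\<Sum>r<p + k. \<theta> r * Amat n k p h r i l)"

definition gtheta :: "nat \<Rightarrow> nat \<Rightarrow> nat \<Rightarrow> (nat \<Rightarrow> nat \<Rightarrow> nat option)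
    \<Rightarrow> (nat \<Rightarrow> real) \<Rightarrow> nat \<Rightarrow> nat \<Rightarrow> real" where
  "gtheta n k p h \<theta> i l =
     exp (atheta n k p h \<theta> i l) / (\<Sum>l'<k. exp (atheta n k p h \<theta> i l'))"

definition Gfam :: "nat \<Rightarrow> nat \<Rightarrow> nat \<Rightarrow> (nat \<Rightarrow> nat \<Rightarrow> nat option)
    \<Rightarrow> (nat \<Rightarrow> nat \<Rightarrow> real) set" where
  "Gfam n k p h = range (gtheta n k p h)"

definition bstar :: "nat \<Rightarrow> nat \<Rightarrow> nat \<Rightarrow> (nat \<Rightarrow> nat \<Rightarrow> nat option)
    \<Rightarrow> (nat \<Rightarrow> nat \<Rightarrow> real) \<Rightarrow> nat \<Rightarrow> real" where
  "bstar n k p h \<eta> r = (\<Sum>i<n. \<Sum>l<k. Amat n k p h r i l * \<eta> i l)"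

definition simplex :: "nat \<Rightarrow> (nat \<Rightarrow> real) \<Rightarrow> bool" where
  "simplex k v \<longleftrightarrow> (\<forall>l<k. 0 \<le> v l) \<and> (\<Sum>l<k. v l) = 1"

definition simplexn :: "nat \<Rightarrow> nat \<Rightarrow> (nat \<Rightarrow> nat \<Rightarrow> real) \<Rightarrow> bool" where
  "simplexn n k z \<longleftrightarrow> (\<forall>i<n. simplex k (z i))"

definition KLd :: "nat \<Rightarrow> nat \<Rightarrow> (nat \<Rightarrow> nat \<Rightarrow> real) \<Rightarrow> (nat \<Rightarrow> nat \<Rightarrow> real) \<Rightarrow> real" where
  "KLd n k \<mu> \<nu> =
     (\<Sum>i<n. \<Sum>l<k. (if \<mu> i l = 0 then 0 else \<mu> i l * ln (\<mu> i l / \<nu> i l)))"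

definition ghat :: "nat \<Rightarrow> nat \<Rightarrow> (nat \<Rightarrow> nat \<Rightarrow> nat option)
    \<Rightarrow> (nat \<Rightarrow> real) \<Rightarrow> (nat \<Rightarrow> real) \<Rightarrow> nat \<Rightarrow> nat \<Rightarrow> real" where
  "ghat k p h w b i l =
     w l * (\<Prod>j\<in>{j. j < p \<and> h j i = Some l}. b j)
         * (\<Prod>j\<in>{j. j < p \<and> h j i \<noteq> Some l \<and> h j i \<noteq> None}. (1 - b j) / (real k - 1))"

definition gds :: "nat \<Rightarrow> nat \<Rightarrow> (nat \<Rightarrow> nat \<Rightarrow> nat option)
    \<Rightarrow> (nat \<Rightarrow> real) \<Rightarrow> (nat \<Rightarrow> real) \<Rightarrow> nat \<Rightarrow> nat \<Rightarrow> real" where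
  "gds k p h w b i l = ghat k p h w b i l / (\<Sum>l'<k. ghat k p h w b i l')"

definition Gds_open :: "nat \<Rightarrow> nat \<Rightarrow> (nat \<Rightarrow> nat \<Rightarrow> nat option)
    \<Rightarrow> (nat \<Rightarrow> nat \<Rightarrow> real) set" where
  "Gds_open k p h = {gds k p h w b | w b. simplex k w \<and> (\<forall>l<k. 0 < w l \<and> w l < 1)
                                           \<and> (\<forall>j<p. 0 < b j \<and> b j < 1)}"

end

theory Submission
  imports Defs
begin

text \<open>The family \<open>Gfam\<close> is an exponential family with sufficient statistic \<open>A\<close>.
  A minimiser \<open>g*\<close> of \<open>d(\<eta>, \<cdot>)\<close> over it therefore matches the moments of \<open>\<eta>\<close>
  (\<open>A g* = A \<eta>\<close>), and as \<open>ln g\<^sub>\<theta>\<close> is affine in the moments this yields the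
  Pythagorean identity \<open>d(\<eta>, g\<^sub>\<theta>) = d(\<eta>, g*) + d(g*, g\<^sub>\<theta>)\<close> for every \<open>\<theta>\<close>.
  An OCDS prediction with parameters in the open range is a member of \<open>Gfam\<close> (its natural
  parameters are the rule-accuracy log-odds and the log class frequencies), and conversely every
  member of \<open>Gfam\<close> is such a prediction; so both the identity and the infimum transfer to
  \<open>Gds_open\<close>. The last claim is then arithmetic, as \<open>g\<^sup>d\<^sup>s(w*, b*)\<close> lies in \<open>Gds_open\<close>.\<close>

definition gtheta_normalizer :: "nat \<Rightarrow> nat \<Rightarrow> nat \<Rightarrow> (nat \<Rightarrow> nat \<Rightarrow> nat option)
    \<Rightarrow> (nat \<Rightarrow> real) \<Rightarrow> nat \<Rightarrow> real" where
  "gtheta_normalizer n k p h \<theta> i = (\<Sum>l<k. exp (atheta n k p h \<theta> i l))"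

definition negentropy :: "nat \<Rightarrow> nat \<Rightarrow> (nat \<Rightarrow> nat \<Rightarrow> real) \<Rightarrow> real" where
  "negentropy n k \<mu> = (\<Sum>i<n. \<Sum>l<k. (if \<mu> i l = 0 then 0 else \<mu> i l * ln (\<mu> i l)))"

definition cross_log :: "nat \<Rightarrow> nat \<Rightarrow> (nat \<Rightarrow> nat \<Rightarrow> real) \<Rightarrow> (nat \<Rightarrow> nat \<Rightarrow> real) \<Rightarrow> real" where
  "cross_log n k \<mu> \<nu> = (\<Sum>i<n. \<Sum>l<k. \<mu> i l * ln (\<nu> i l))"

lemma gtheta_normalizer_pos: "k \<ge> 1 \<Longrightarrow> gtheta_normalizer n k p h \<theta> i > 0"
  unfolding gtheta_normalizer_def by (intro sum_pos) (auto simp: lessThan_empty_iff)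

lemma gtheta_pos: "k \<ge> 1 \<Longrightarrow> gtheta n k p h \<theta> i l > 0"
  using gtheta_normalizer_pos[of k n p h \<theta> i] unfolding gtheta_def gtheta_normalizer_def by simp

lemma ln_gtheta:
  "k \<ge> 1 \<Longrightarrow> ln (gtheta n k p h \<theta> i l) = atheta n k p h \<theta> i l - ln (gtheta_normalizer n k p h \<theta> i)"
  using gtheta_normalizer_pos[of k n p h \<theta> i]
  unfolding gtheta_def gtheta_normalizer_def[symmetric] by (simp add: ln_div)

lemma sum_gtheta_eq_1: "k \<ge> 1 \<Longrightarrow> (\<Sum>l<k. gtheta n k p h \<theta> i l) = 1"
  using gtheta_normalizer_pos[of k n p h \<theta> i]
  unfolding gtheta_def by (simp add: sum_divide_distrib[symmetric] gtheta_normalizer_def)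

lemma KLd_eq_negentropy_minus_cross_log:
  assumes "\<forall>i<n. \<forall>l<k. 0 \<le> \<mu> i l \<and> 0 < \<nu> i l"
  shows "KLd n k \<mu> \<nu> = negentropy n k \<mu> - cross_log n k \<mu> \<nu>"
proof -
  have "KLd n k \<mu> \<nu> = (\<Sum>i<n. \<Sum>l<k. (if \<mu> i l = 0 then 0 else \<mu> i l * ln (\<mu> i l)) - \<mu> i l * ln (\<nu> i l))"
    unfolding KLd_def
  proof (intro sum.cong refl)
    fix i l assume "i \<in> {..<n}" "l \<in> {..<k}"
    then have "0 \<le> \<mu> i l" "0 < \<nu> i l" using assms by auto
    then show "(if \<mu> i l = 0 then 0 else \<mu> i l * ln (\<mu> i l / \<nu> i l)) =
      (if \<mu> i l = 0 then 0 else \<mu> i l * ln (\<mu> i l)) - \<mu> i l * ln (\<nu> i l)"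
      by (cases "\<mu> i l = 0") (simp_all add: ln_div algebra_simps)
  qed
  then show ?thesis by (simp add: negentropy_def cross_log_def sum_subtractf)
qed

lemma KLd_self: "KLd n k \<mu> \<mu> = 0"
  unfolding KLd_def by (auto intro!: sum.neutral)

lemma KLd_cong_right: "(\<forall>i<n. \<forall>l<k. \<nu> i l = \<nu>' i l) \<Longrightarrow> KLd n k \<mu> \<nu> = KLd n k \<mu> \<nu>'"
  unfolding KLd_def by (intro sum.cong refl) auto

lemma cross_log_gtheta:
  assumes "k \<ge> 1" and rows: "\<forall>i<n. (\<Sum>l<k. x i l) = 1"
  shows "cross_log n k x (gtheta n k p h \<theta>) =
     (\<Sum>r<p+k. \<theta> r * bstar n k p h x r) - (\<Sum>i<n. ln (gtheta_normalizer n k p h \<theta> i))"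
proof -
  have "cross_log n k x (gtheta n k p h \<theta>) =
     (\<Sum>i<n. \<Sum>l<k. x i l * atheta n k p h \<theta> i l)
     - (\<Sum>i<n. (\<Sum>l<k. x i l) * ln (gtheta_normalizer n k p h \<theta> i))"
    by (simp add: cross_log_def ln_gtheta[OF assms(1)] right_diff_distrib sum_subtractf sum_distrib_right)
  also have "(\<Sum>i<n. \<Sum>l<k. x i l * atheta n k p h \<theta> i l)
      = (\<Sum>i<n. \<Sum>l<k. \<Sum>r<p+k. \<theta> r * (Amat n k p h r i l * x i l))"
    unfolding atheta_def by (simp add: sum_distrib_left mult_ac)
  also have "\<dots> = (\<Sum>r<p+k. \<theta> r * bstar n k p h x r)"
    unfolding bstar_def sum_distrib_left
    by (subst sum.swap) (simp add: sum.swap[of _ "{..<k}"])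
  also have "(\<Sum>i<n. (\<Sum>l<k. x i l) * ln (gtheta_normalizer n k p h \<theta> i))
      = (\<Sum>i<n. ln (gtheta_normalizer n k p h \<theta> i))"
    using rows by simp
  finally show ?thesis .
qed

lemma KLd_gtheta:
  assumes "k \<ge> 1" and "simplexn n k \<eta>"
  shows "KLd n k \<eta> (gtheta n k p h \<theta>) = negentropy n k \<eta>
     - (\<Sum>r<p+k. \<theta> r * bstar n k p h \<eta> r) + (\<Sum>i<n. ln (gtheta_normalizer n k p h \<theta> i))"
proof -
  have "\<forall>i<n. \<forall>l<k. 0 \<le> \<eta> i l \<and> 0 < gtheta n k p h \<theta> i l"
    using assms gtheta_pos by (auto simp: simplexn_def simplex_def)
  moreover have "\<forall>i<n. (\<Sum>l<k. \<eta> i l) = 1"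
    using assms(2) by (simp add: simplexn_def simplex_def)
  ultimately show ?thesis
    by (simp add: KLd_eq_negentropy_minus_cross_log cross_log_gtheta[OF assms(1)])
qed

lemma sum_coordinate_shift:
  fixes c \<theta> :: "nat \<Rightarrow> real"
  assumes "r < m"
  shows "(\<Sum>s<m. (\<theta> s + (if s = r then t else 0)) * c s) = (\<Sum>s<m. \<theta> s * c s) + t * c r"
proof -
  have "(\<Sum>s<m. (if s = r then t else 0) * c s) = (\<Sum>s<m. if s = r then t * c s else 0)"
    by (intro sum.cong) auto
  then show ?thesis using assms by (simp add: distrib_right sum.distrib)
qed

lemma atheta_shift:
  assumes "r < p + k"
  shows "atheta n k p h (\<lambda>s. \<theta> s + (if s = r then t else 0)) i l
       = atheta n k p h \<theta> i l + t * Amat n k p h r i l"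
  using sum_coordinate_shift[OF assms] by (simp add: atheta_def)

text \<open>First-order optimality along each coordinate direction of the natural parameter.\<close>

lemma KLd_minimizer_moments:
  assumes k1: "k \<ge> 1" and eta: "simplexn n k \<eta>"
    and min: "\<And>\<theta>. KLd n k \<eta> (gtheta n k p h \<theta>0) \<le> KLd n k \<eta> (gtheta n k p h \<theta>)"
    and r: "r < p + k"
  shows "bstar n k p h (gtheta n k p h \<theta>0) r = bstar n k p h \<eta> r"
proof -
  define a where "a = atheta n k p h \<theta>0"
  define A where "A = Amat n k p h r"
  define F where "F t = (\<Sum>i<n. ln (\<Sum>l<k. exp (a i l + t * A i l))) - t * bstar n k p h \<eta> r" for t
  have KLd_F: "KLd n k \<eta> (gtheta n k p h (\<lambda>s. \<theta>0 s + (if s = r then t else 0)))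
      = negentropy n k \<eta> - (\<Sum>s<p+k. \<theta>0 s * bstar n k p h \<eta> s) + F t" for t
    using sum_coordinate_shift[OF r, of \<theta>0 t "bstar n k p h \<eta>"]
    by (simp add: KLd_gtheta[OF k1 eta] gtheta_normalizer_def atheta_shift[OF r] F_def a_def A_def)
  have "F 0 \<le> F t" for t
    using min[of "\<lambda>s. \<theta>0 s + (if s = r then t else 0)"] KLd_F[of 0] by (simp add: KLd_F)
  moreover
  have Z_pos: "(\<Sum>l<k. exp (a i l)) > 0" for i
    using k1 by (intro sum_pos) (auto simp: lessThan_empty_iff)
  define D where "D = (\<Sum>i<n. (\<Sum>l<k. exp (a i l) * A i l) / (\<Sum>l<k. exp (a i l))) - bstar n k p h \<eta> r"
  have "(F has_field_derivative D) (at 0)"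
    unfolding F_def D_def
    by (rule derivative_eq_intros refl | simp add: Z_pos mult.commute)+
  ultimately have "D = 0"
    using DERIV_local_min[of F D 0 1] by simp
  moreover have "(\<Sum>l<k. exp (a i l) * A i l) / (\<Sum>l<k. exp (a i l))
      = (\<Sum>l<k. A i l * gtheta n k p h \<theta>0 i l)" for i
    unfolding gtheta_def a_def by (simp add: sum_divide_distrib mult_ac)
  ultimately show ?thesis unfolding D_def A_def bstar_def by simp
qed

lemma KLd_gtheta_pythagorean:
  assumes k1: "k \<ge> 1" and eta: "simplexn n k \<eta>"
    and moments: "\<forall>r<p+k. bstar n k p h (gtheta n k p h \<theta>0) r = bstar n k p h \<eta> r"
  shows "KLd n k \<eta> (gtheta n k p h \<theta>)
       = KLd n k \<eta> (gtheta n k p h \<theta>0) + KLd n k (gtheta n k p h \<theta>0) (gtheta n k p h \<theta>)"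
proof -
  let ?gstar = "gtheta n k p h \<theta>0"
  let ?g = "gtheta n k p h \<theta>"
  have eta_nonneg: "\<forall>i<n. \<forall>l<k. 0 \<le> \<eta> i l" and eta_rows: "\<forall>i<n. (\<Sum>l<k. \<eta> i l) = 1"
    using eta by (auto simp: simplexn_def simplex_def)
  have g_pos: "0 < gtheta n k p h \<theta>' i l" for \<theta>' i l
    using gtheta_pos[OF k1] .
  have cross: "cross_log n k \<eta> (gtheta n k p h \<theta>') = cross_log n k ?gstar (gtheta n k p h \<theta>')" for \<theta>'
  proof -
    have "(\<Sum>r<p+k. \<theta>' r * bstar n k p h \<eta> r) = (\<Sum>r<p+k. \<theta>' r * bstar n k p h ?gstar r)"
      using moments by simp
    then show ?thesis by (simp add: cross_log_gtheta[OF k1] eta_rows sum_gtheta_eq_1[OF k1])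
  qed
  have "KLd n k \<eta> ?g = negentropy n k \<eta> - cross_log n k \<eta> ?g"
    and "KLd n k \<eta> ?gstar = negentropy n k \<eta> - cross_log n k \<eta> ?gstar"
    and "KLd n k ?gstar ?g = negentropy n k ?gstar - cross_log n k ?gstar ?g"
    and "0 = negentropy n k ?gstar - cross_log n k ?gstar ?gstar"
    using KLd_eq_negentropy_minus_cross_log eta_nonneg g_pos less_imp_le KLd_self[of n k ?gstar]
    by metis+
  then show ?thesis using cross[of \<theta>] cross[of \<theta>0] by simp
qed

lemma sum_lessThan_add: "(\<Sum>r<p+k. f r) = (\<Sum>r<p. f r) + (\<Sum>s<k. f (p+s))"
  for f :: "nat \<Rightarrow> 'a::comm_monoid_add"
  by (induction k) (auto simp: add.assoc)

lemma atheta_eq: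
  assumes "l < k"
  shows "atheta n k p h \<theta> i l
       = (\<Sum>j\<in>{j. j < p \<and> h j i = Some l}. \<theta> j / real (nrule n h j)) + \<theta> (p+l) / real n"
proof -
  have "(\<Sum>r<p. \<theta> r * Amat n k p h r i l)
      = (\<Sum>j<p. if h j i = Some l then \<theta> j / real (nrule n h j) else 0)"
    by (intro sum.cong) (auto simp: Amat_def)
  also have "\<dots> = (\<Sum>j\<in>{j. j < p \<and> h j i = Some l}. \<theta> j / real (nrule n h j))"
    by (simp add: sum.If_cases Int_def conj_commute)
  finally have rules: "(\<Sum>r<p. \<theta> r * Amat n k p h r i l) = \<dots>" .
  have "(\<Sum>s<k. \<theta> (p+s) * Amat n k p h (p+s) i l) = (\<Sum>s<k. if s = l then \<theta> (p+l) / real n else 0)"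
    by (intro sum.cong) (auto simp: Amat_def)
  then have classes: "(\<Sum>s<k. \<theta> (p+s) * Amat n k p h (p+s) i l) = \<theta> (p+l) / real n"
    using assms by simp
  show ?thesis unfolding atheta_def sum_lessThan_add rules classes ..
qed

lemma gtheta_shift_invariant:
  assumes "\<forall>l<k. atheta n k p h \<theta>' i l = atheta n k p h \<theta> i l + C" and "l < k"
  shows "gtheta n k p h \<theta>' i l = gtheta n k p h \<theta> i l"
proof -
  have "(\<Sum>l'<k. exp (atheta n k p h \<theta>' i l')) = exp C * (\<Sum>l'<k. exp (atheta n k p h \<theta> i l'))"
    unfolding sum_distrib_left using assms(1) by (simp add: exp_add mult_ac)
  then show ?thesis unfolding gtheta_def using assms by (simp add: exp_add mult_ac)
qed

definition ds_theta :: "nat \<Rightarrow> nat \<Rightarrow> nat \<Rightarrow> (nat \<Rightarrow> nat \<Rightarrow> nat option)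
    \<Rightarrow> (nat \<Rightarrow> real) \<Rightarrow> (nat \<Rightarrow> real) \<Rightarrow> nat \<Rightarrow> real" where
  "ds_theta n k p h w b r =
     (if r < p then real (nrule n h r) * ln (b r * (real k - 1) / (1 - b r))
      else real n * ln (w (r - p)))"

lemma atheta_ds_theta:
  assumes n1: "n \<ge> 1" and nr: "\<forall>j<p. nrule n h j \<ge> 1" and l: "l < k"
  shows "atheta n k p h (ds_theta n k p h w b) i l
       = (\<Sum>j\<in>{j. j < p \<and> h j i = Some l}. ln (b j * (real k - 1) / (1 - b j))) + ln (w l)"
  unfolding atheta_eq[OF l]
proof (intro arg_cong2[where f="(+)"] sum.cong refl)
  fix j assume "j \<in> {j. j < p \<and> h j i = Some l}"
  with nr show "ds_theta n k p h w b j / real (nrule n h j) = ln (b j * (real k - 1) / (1 - b j))"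
    by (auto simp: ds_theta_def not_le)
qed (use n1 in \<open>simp add: ds_theta_def\<close>)

text \<open>Dividing out the factor \<open>(1 - b\<^sub>j)/(k - 1)\<close> of every non-abstaining rule,
  which does not depend on the class, turns \<open>ghat\<close> into an exponential.\<close>

lemma ghat_eq_exp_atheta:
  assumes k2: "k \<ge> 2" and n1: "n \<ge> 1" and nr: "\<forall>j<p. nrule n h j \<ge> 1"
    and w: "\<forall>l<k. 0 < w l" and b: "\<forall>j<p. 0 < b j \<and> b j < 1" and l: "l < k"
  shows "ghat k p h w b i l = (\<Prod>j\<in>{j. j < p \<and> h j i \<noteq> None}. (1 - b j) / (real k - 1))
          * exp (atheta n k p h (ds_theta n k p h w b) i l)"
proof -
  let ?S = "{j. j < p \<and> h j i = Some l}"
  let ?T = "{j. j < p \<and> h j i \<noteq> Some l \<and> h j i \<noteq> None}"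
  let ?c = "\<lambda>j. (1 - b j) / (real k - 1)"
  have k1: "real k - 1 > 0" using k2 by simp
  have exp_atheta: "exp (atheta n k p h (ds_theta n k p h w b) i l)
      = (\<Prod>j\<in>?S. b j * (real k - 1) / (1 - b j)) * w l"
    using w l b k1 by (simp add: atheta_ds_theta[OF n1 nr l] exp_add exp_sum)
  have "{j. j < p \<and> h j i \<noteq> None} = ?S \<union> ?T" by auto
  then have split: "(\<Prod>j\<in>{j. j < p \<and> h j i \<noteq> None}. ?c j) = (\<Prod>j\<in>?S. ?c j) * (\<Prod>j\<in>?T. ?c j)"
    by (simp add: prod.union_disjoint disjoint_iff)
  have "(\<Prod>j\<in>?S. ?c j) * (\<Prod>j\<in>?S. b j * (real k - 1) / (1 - b j)) = (\<Prod>j\<in>?S. b j)"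
    unfolding prod.distrib[symmetric] using b k1 by (intro prod.cong refl) auto
  then show ?thesis unfolding exp_atheta split ghat_def by (simp add: mult_ac)
qed

lemma gds_eq_gtheta:
  assumes k2: "k \<ge> 2" and n1: "n \<ge> 1" and nr: "\<forall>j<p. nrule n h j \<ge> 1"
    and w: "\<forall>l<k. 0 < w l" and b: "\<forall>j<p. 0 < b j \<and> b j < 1" and l: "l < k"
  shows "gds k p h w b i l = gtheta n k p h (ds_theta n k p h w b) i l"
proof -
  let ?c = "\<Prod>j\<in>{j. j < p \<and> h j i \<noteq> None}. (1 - b j) / (real k - 1)"
  have c_nonzero: "?c \<noteq> 0" using b k2 by (intro less_imp_neq[symmetric] prod_pos) auto
  have sum_ghat: "(\<Sum>l'<k. ghat k p h w b i l') = ?c * (\<Sum>l'<k. exp (atheta n k p h (ds_theta n k p h w b) i l'))"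
    unfolding sum_distrib_left using ghat_eq_exp_atheta[OF k2 n1 nr w b] by simp
  show ?thesis
    unfolding gds_def gtheta_def ghat_eq_exp_atheta[OF k2 n1 nr w b l] sum_ghat
    by (rule mult_divide_mult_cancel_left[OF c_nonzero])
qed

lemma Gds_open_in_Gfam:
  assumes k2: "k \<ge> 2" and n1: "n \<ge> 1" and nr: "\<forall>j<p. nrule n h j \<ge> 1"
    and "g \<in> Gds_open k p h"
  shows "\<exists>\<theta>. \<forall>i<n. \<forall>l<k. g i l = gtheta n k p h \<theta> i l"
  using assms(4) gds_eq_gtheta[OF k2 n1 nr] unfolding Gds_open_def by blast

text \<open>Invert \<open>ds_theta\<close> coordinatewise; the class coordinates are only determined up to the
  normalisation of \<open>w\<close>, which shifts \<open>atheta\<close> by the constant \<open>-ln W\<close>.\<close>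

lemma gtheta_in_Gds_open:
  assumes k2: "k \<ge> 2" and n1: "n \<ge> 1" and nr: "\<forall>j<p. nrule n h j \<ge> 1"
  shows "\<exists>g\<in>Gds_open k p h. \<forall>i<n. \<forall>l<k. g i l = gtheta n k p h \<theta> i l"
proof -
  define E where "E l = exp (\<theta> (p+l) / real n)" for l
  define W where "W = (\<Sum>l<k. E l)"
  define w where "w l = E l / W" for l
  define c where "c j = exp (\<theta> j / real (nrule n h j)) / (real k - 1)" for j
  define b where "b j = c j / (1 + c j)" for j
  have k1: "real k - 1 > 0" using k2 by simp
  have E_pos: "E l > 0" for l by (simp add: E_def)
  have W_pos: "W > 0" unfolding W_def using k2 E_pos by (intro sum_pos) (auto simp: lessThan_empty_iff)
  have c_pos: "c j > 0" for j using k1 by (simp add: c_def)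
  have w_pos: "\<forall>l<k. 0 < w l" using E_pos W_pos by (simp add: w_def)
  have w_less_1: "\<forall>l<k. w l < 1"
  proof (intro allI impI)
    fix l assume l: "l < k"
    define l' where "l' = (if l = 0 then 1 else 0 :: nat)"
    have l': "l' < k" "l' \<noteq> l" using k2 by (auto simp: l'_def)
    have "W = E l + (\<Sum>x\<in>{..<k} - {l}. E x)" unfolding W_def using l by (simp add: sum.remove)
    moreover have "(\<Sum>x\<in>{..<k} - {l}. E x) > 0" using l' E_pos by (intro sum_pos) auto
    ultimately show "w l < 1" unfolding w_def using W_pos by simp
  qed
  have w_simplex: "simplex k w"
    unfolding simplex_def using w_pos W_pos
    by (auto simp: w_def W_def sum_divide_distrib[symmetric] less_imp_le)
  have b_range: "\<forall>j<p. 0 < b j \<and> b j < 1"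
  proof (intro allI impI)
    fix j show "0 < b j \<and> b j < 1" using c_pos[of j] by (simp add: b_def field_simps)
  qed
  let ?g = "gds k p h w b"
  have "?g \<in> Gds_open k p h" unfolding Gds_open_def using w_simplex w_pos w_less_1 b_range by blast
  moreover have "?g i l = gtheta n k p h \<theta> i l" if "i < n" "l < k" for i l
  proof -
    have rule_coords: "ds_theta n k p h w b j = \<theta> j" if "j < p" for j
    proof -
      have "b j * (real k - 1) / (1 - b j) = c j * (real k - 1)"
        using c_pos[of j] by (simp add: b_def field_simps)
      also have "\<dots> = exp (\<theta> j / real (nrule n h j))"
        using k1 by (simp add: c_def)
      finally have "b j * (real k - 1) / (1 - b j) = exp (\<theta> j / real (nrule n h j))" .
      moreover have "real (nrule n h j) \<noteq> 0" using nr that by (auto simp: not_le)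
      ultimately show ?thesis using that by (simp add: ds_theta_def)
    qed
    have class_coords: "ds_theta n k p h w b (p + l) / real n = \<theta> (p + l) / real n - ln W" for l
      using n1 E_pos W_pos by (simp add: ds_theta_def w_def ln_div E_def)
    have "\<forall>l<k. atheta n k p h (ds_theta n k p h w b) i l = atheta n k p h \<theta> i l + (- ln W)"
      by (auto simp: atheta_eq class_coords rule_coords intro!: sum.cong)
    from gtheta_shift_invariant[OF this \<open>l < k\<close>] show ?thesis
      using gds_eq_gtheta[OF k2 n1 nr w_pos b_range \<open>l < k\<close>] by simp
  qed
  ultimately show ?thesis by blast
qed

lemma bstar_class:
  assumes "l < k"
  shows "bstar n k p h \<eta> (p + l) = (\<Sum>i<n. \<eta> i l) / real n"
proof -
  have "bstar n k p h \<eta> (p + l) = (\<Sum>i<n. \<Sum>l'<k. if l' = l then \<eta> i l / real n else 0)"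
    unfolding bstar_def by (intro sum.cong refl) (auto simp: Amat_def)
  then show ?thesis using assms by (simp add: sum_divide_distrib)
qed

lemma sum_bstar_class:
  assumes "n \<ge> 1" and "simplexn n k \<eta>"
  shows "(\<Sum>l<k. bstar n k p h \<eta> (p + l)) = 1"
proof -
  have "(\<Sum>l<k. bstar n k p h \<eta> (p + l)) = (\<Sum>i<n. \<Sum>l<k. \<eta> i l) / real n"
    by (simp add: bstar_class sum_divide_distrib[symmetric] sum.swap[of _ "{..<k}"])
  also have "(\<Sum>i<n. \<Sum>l<k. \<eta> i l) = real n"
    using assms(2) by (simp add: simplexn_def simplex_def)
  finally show ?thesis using assms(1) by simp
qed

lemma KLd_Gds_open_pythagorean:
  assumes k2: "k \<ge> 2" and n1: "n \<ge> 1" and nr: "\<forall>j<p. nrule n h j \<ge> 1"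
    and eta: "simplexn n k \<eta>"
    and min: "\<And>\<theta>. KLd n k \<eta> (gtheta n k p h \<theta>0) \<le> KLd n k \<eta> (gtheta n k p h \<theta>)"
    and g: "g \<in> Gds_open k p h"
  shows "KLd n k \<eta> g = KLd n k \<eta> (gtheta n k p h \<theta>0) + KLd n k (gtheta n k p h \<theta>0) g
    \<and> KLd n k \<eta> (gtheta n k p h \<theta>0) \<le> KLd n k \<eta> g"
proof -
  have k1: "k \<ge> 1" using k2 by simp
  obtain \<theta> where "\<forall>i<n. \<forall>l<k. g i l = gtheta n k p h \<theta> i l"
    using Gds_open_in_Gfam[OF k2 n1 nr g] by blast
  then have "KLd n k \<eta> g = KLd n k \<eta> (gtheta n k p h \<theta>)"
    and "KLd n k (gtheta n k p h \<theta>0) g = KLd n k (gtheta n k p h \<theta>0) (gtheta n k p h \<theta>)"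
    by (simp_all add: KLd_cong_right)
  moreover have "\<forall>r<p+k. bstar n k p h (gtheta n k p h \<theta>0) r = bstar n k p h \<eta> r"
    using KLd_minimizer_moments[OF k1 eta min] by blast
  note KLd_gtheta_pythagorean[OF k1 eta this, of \<theta>]
  ultimately show ?thesis using min[of \<theta>] by simp
qed

lemma gds_bstar_in_Gds_open:
  assumes "n \<ge> 1" and "simplexn n k \<eta>"
    and "\<forall>j<p. 0 < bstar n k p h \<eta> j \<and> bstar n k p h \<eta> j < 1"
    and "\<forall>l<k. 0 < bstar n k p h \<eta> (p + l) \<and> bstar n k p h \<eta> (p + l) < 1"
  shows "gds k p h (\<lambda>l. bstar n k p h \<eta> (p + l)) (bstar n k p h \<eta>) \<in> Gds_open k p h"
proof -
  have "simplex k (\<lambda>l. bstar n k p h \<eta> (p + l))"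
    using assms(4) sum_bstar_class[OF assms(1,2)] unfolding simplex_def by (simp add: less_imp_le)
  then show ?thesis using assms(3,4) unfolding Gds_open_def by blast
qed

theorem lemma6:
  fixes n k p :: nat
    and h :: "nat \<Rightarrow> nat \<Rightarrow> nat option"
    and \<eta> gstar :: "nat \<Rightarrow> nat \<Rightarrow> real"
  assumes "n \<ge> 1" and "k \<ge> 2" and "p \<ge> 1"
    and "\<forall>j<p. \<forall>i<n. \<forall>l. h j i = Some l \<longrightarrow> l < k"
    and "\<forall>j<p. nrule n h j \<ge> 1"
    and "simplexn n k \<eta>"
    and "gstar \<in> Gfam n k p h"
    and "\<forall>g\<in>Gfam n k p h. KLd n k \<eta> gstar \<le> KLd n k \<eta> g"
  shows "(INF g\<in>Gds_open k p h. KLd n k \<eta> g) = KLd n k \<eta> gstar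
    \<and> (\<forall>g\<in>Gds_open k p h. KLd n k \<eta> g = KLd n k \<eta> gstar + KLd n k gstar g)
    \<and> ((\<forall>j<p. 0 < bstar n k p h \<eta> j \<and> bstar n k p h \<eta> j < 1)
        \<and> (\<forall>l<k. 0 < bstar n k p h \<eta> (p + l) \<and> bstar n k p h \<eta> (p + l) < 1)
       \<longrightarrow> (let gdsstar = gds k p h (\<lambda>l. bstar n k p h \<eta> (p + l)) (bstar n k p h \<eta>)
            in (\<forall>g\<in>Gds_open k p h.
                  KLd n k gstar g = (KLd n k \<eta> gdsstar - KLd n k \<eta> gstar)
                                    + (KLd n k \<eta> g - KLd n k \<eta> gdsstar))
               \<and> KLd n k \<eta> gdsstar - KLd n k \<eta> gstar \<ge> 0))"
proof -
  note n1 = assms(1) and k2 = assms(2) and nr = assms(5) and eta = assms(6)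
  obtain \<theta>0 where gstar: "gstar = gtheta n k p h \<theta>0" using assms(7) unfolding Gfam_def by auto
  have "KLd n k \<eta> (gtheta n k p h \<theta>0) \<le> KLd n k \<eta> (gtheta n k p h \<theta>)" for \<theta>
    using assms(8) unfolding gstar Gfam_def by blast
  note pythagorean = KLd_Gds_open_pythagorean[OF k2 n1 nr eta this, folded gstar]
  have "(INF g\<in>Gds_open k p h. KLd n k \<eta> g) = KLd n k \<eta> gstar"
  proof (rule cInf_eq_minimum)
    obtain g where "g \<in> Gds_open k p h" "\<forall>i<n. \<forall>l<k. g i l = gstar i l"
      using gtheta_in_Gds_open[OF k2 n1 nr] unfolding gstar by blast
    then show "KLd n k \<eta> gstar \<in> (\<lambda>g. KLd n k \<eta> g) ` Gds_open k p h"
      using KLd_cong_right by (metis image_eqI)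
  qed (use pythagorean in blast)
  moreover have "0 \<le> KLd n k gstar g" if "g \<in> Gds_open k p h" for g
    using pythagorean[OF that] by simp
  ultimately show ?thesis
    using pythagorean gds_bstar_in_Gds_open[OF n1 eta, of p h] by (auto simp: Let_def)
qed

end
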